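(* Let $\mathbf{M}$ be a compact smooth submanifold without boundary of $\mathbf{R}^s$ with cutlocus $\mathbf{C}$ and nearest-point mapping $\pi$. Suppose $t_0,t_1\notin\mathbf{C}$ and $\pi(t_0)=\pi(t_1)=\mu\in\mathbf{M}$. Then for every $\alpha\in[0,1]$, the point $t_\alpha=(1-\alpha)t_0+\alpha t_1$ satisfies $t_\alpha\notin\mathbf{C}$ and $\pi(t_\alpha)=\mu$. In other words, $\pi^{-1}\{\mu\}\setminus\mathbf{C}$ is convex.
   Context: The cutlocus $\mathbf{C}$ is the set of $x\in\mathbf{R}^s$ such that the minimizer of $L_x(\mu)=\|\mu-x\|^2$ over $\mathbf{M}$ is not unique, or $L_x$ has a degenerate second derivative (Hessian) at its minimizer; for $x\notin\mathbf{C}$, $\pi(x)=\arg\min_{\mu\in\mathbf{M}}\|\mu-x\|$. *)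

theory Defs
  imports "HOL-Analysis.Analysis"
begin

fun dd :: "'a::real_normed_vector list \<Rightarrow> ('a \<Rightarrow> 'b::real_normed_vector) \<Rightarrow> 'a \<Rightarrow> 'b" where
  "dd [] f = f"
| "dd (v # vs) f = (\<lambda>x. frechet_derivative (dd vs f) (at x) v)"

definition smooth_on :: "'a::real_normed_vector set \<Rightarrow> ('a \<Rightarrow> 'b::real_normed_vector) \<Rightarrow> bool" where
  "smooth_on U f \<longleftrightarrow> (\<forall>vs. \<forall>x\<in>U. dd vs f differentiable (at x))"

definition local_param ::
  "'a::euclidean_space set \<Rightarrow> 'd::euclidean_space set \<Rightarrow> ('d \<Rightarrow> 'a) \<Rightarrow> bool" where
  "local_param M V \<psi> \<longleftrightarrow> open V \<and> smooth_on V \<psi>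
     \<and> (\<forall>v\<in>V. inj (frechet_derivative \<psi> (at v)))
     \<and> (\<exists>W g. open W \<and> homeomorphism V (M \<inter> W) \<psi> g)"

text \<open>M is a smooth submanifold without boundary of dimension DIM('d).\<close>
definition smooth_submanifold :: "'a::euclidean_space set \<Rightarrow> 'd::euclidean_space itself \<Rightarrow> bool" where
  "smooth_submanifold M _ \<longleftrightarrow>
     (\<forall>p\<in>M. \<exists>V (\<psi>::'d \<Rightarrow> 'a). local_param M V \<psi> \<and> p \<in> \<psi> ` V)"

definition is_nearest :: "'a::euclidean_space set \<Rightarrow> 'a \<Rightarrow> 'a \<Rightarrow> bool" where
  "is_nearest M x \<mu> \<longleftrightarrow> \<mu> \<in> M \<and> (\<forall>\<nu>\<in>M. (norm (\<mu> - x))\<^sup>2 \<le> (norm (\<nu> - x))\<^sup>2)"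

definition hessian_degenerate :: "('d::euclidean_space \<Rightarrow> real) \<Rightarrow> 'd \<Rightarrow> bool" where
  "hessian_degenerate g v \<longleftrightarrow> (\<exists>a. a \<noteq> 0 \<and> (\<forall>b. dd [b, a] g v = 0))"

definition cutlocus :: "'a::euclidean_space set \<Rightarrow> 'd::euclidean_space itself \<Rightarrow> 'a set" where
  "cutlocus M _ = {x. \<not> (\<exists>!\<mu>. is_nearest M x \<mu>)
      \<or> (\<exists>\<mu> V (\<psi>::'d \<Rightarrow> 'a) v. is_nearest M x \<mu> \<and> local_param M V \<psi> \<and> v \<in> V \<and> \<psi> v = \<mu>
            \<and> hessian_degenerate (\<lambda>u. (norm (\<psi> u - x))\<^sup>2) v)}"

definition nearest_point :: "'a::euclidean_space set \<Rightarrow> 'a \<Rightarrow> 'a" where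
  "nearest_point M x = (THE \<mu>. is_nearest M x \<mu>)"

end

theory Submission
  imports Defs
begin

text \<open>
  For fixed \<open>\<nu>\<close>, the difference \<open>|\<nu> - t|\<^sup>2 - |\<mu> - t|\<^sup>2\<close> is affine in \<open>t\<close>. Hence if \<open>\<mu>\<close>
  is nearest to \<open>t0\<close> and to \<open>t1\<close>, it is nearest to every \<open>t\<^sub>\<alpha>\<close>, and any other point nearest to
  \<open>t\<^sub>\<alpha>\<close> would be nearest to \<open>t0\<close> or to \<open>t1\<close>, against uniqueness there.
  Likewise, for a chart \<open>\<psi>\<close> with \<open>\<psi> v = \<mu>\<close>, the Hessian at \<open>v\<close> of \<open>u \<mapsto> |\<psi> u - t|\<^sup>2\<close> is
  affine in \<open>t\<close>, and it is positive semidefinite when \<open>\<mu>\<close> is nearest to \<open>t\<close>, since \<open>v\<close> is then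
  a minimum. A positive semidefinite symmetric form vanishing on a vector \<open>a\<close> has \<open>a\<close> in its
  kernel, so a degenerate Hessian for \<open>t\<^sub>\<alpha>\<close> forces a degenerate Hessian for \<open>t0\<close> or \<open>t1\<close>.
  The symmetry of the Hessian (Schwarz's theorem) is obtained from second differences.
\<close>

section \<open>Second derivatives of real functions\<close>

lemma mvt_along_ray:
  fixes F :: "'a::real_normed_vector \<Rightarrow> real"
  assumes "0 < s"
    and der: "\<And>t. t \<in> {0..s} \<Longrightarrow> (F has_derivative F' t) (at (p + t *\<^sub>R q))"
  shows "\<exists>\<xi>\<in>{0<..<s}. F (p + s *\<^sub>R q) - F p = s * F' \<xi> q"
proof -
  have "((\<lambda>t. F (p + t *\<^sub>R q)) has_derivative (\<lambda>h. F' t (h *\<^sub>R q))) (at t within {0..s})"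
    if "t \<in> {0..s}" for t
  proof -
    have "((\<lambda>t. p + t *\<^sub>R q) has_derivative (\<lambda>h. h *\<^sub>R q)) (at t)"
      by (auto intro!: derivative_eq_intros)
    from has_derivative_compose[OF this der[OF that]] show ?thesis
      by (simp add: o_def has_derivative_at_withinI)
  qed
  from mvt_simple[OF \<open>0 < s\<close> this] obtain \<xi>
    where \<xi>: "\<xi> \<in> {0<..<s}" "F (p + s *\<^sub>R q) - F p = F' \<xi> (s *\<^sub>R q)"
    by auto
  have lin: "bounded_linear (F' \<xi>)"
    using der[of \<xi>] \<xi>(1) by (auto dest: has_derivative_bounded_linear)
  have "F' \<xi> (s *\<^sub>R q) = s * F' \<xi> q"
    using linear_cmul[OF bounded_linear.linear[OF lin]] by simp
  with \<xi> show ?thesis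
    by auto
qed

lemma nonneg_if_ge_minus_eps:
  fixes c K :: real
  assumes "0 \<le> K" and "\<And>e. 0 < e \<Longrightarrow> - (e * K) \<le> c"
  shows "0 \<le> c"
proof (rule field_le_epsilon)
  fix e :: real
  assume "0 < e"
  then have "- (e / (K + 1) * K) \<le> c"
    using \<open>0 \<le> K\<close> by (intro assms(2)) (simp add: add_nonneg_pos)
  moreover have "e / (K + 1) * K \<le> e"
    using \<open>0 < e\<close> \<open>0 \<le> K\<close> by (simp add: field_simps)
  ultimately show "0 \<le> c + e"
    by linarith
qed

definition second_difference ::
  "('a::real_vector \<Rightarrow> real) \<Rightarrow> 'a \<Rightarrow> 'a \<Rightarrow> 'a \<Rightarrow> real \<Rightarrow> real" where
  "second_difference f v a b s =
     f (v + s *\<^sub>R a + s *\<^sub>R b) - f (v + s *\<^sub>R b) - f (v + s *\<^sub>R a) + f v"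

lemma second_difference_commute: "second_difference f v a b s = second_difference f v b a s"
  unfolding second_difference_def by (simp add: algebra_simps)

lemma second_difference_mvt:
  fixes f :: "'a::real_normed_vector \<Rightarrow> real"
  assumes "0 < s"
    and df: "\<And>t. t \<in> {0..s} \<Longrightarrow>
      f differentiable at (v + t *\<^sub>R a) \<and> f differentiable at (v + t *\<^sub>R a + s *\<^sub>R b)"
  shows "\<exists>\<xi>\<in>{0<..<s}. second_difference f v a b s =
    s * (dd [a] f (v + \<xi> *\<^sub>R a + s *\<^sub>R b) - dd [a] f (v + \<xi> *\<^sub>R a))"
proof -
  have "((\<lambda>u. f (u + s *\<^sub>R b) - f u) has_derivative
          (\<lambda>h. dd [h] f (v + t *\<^sub>R a + s *\<^sub>R b) - dd [h] f (v + t *\<^sub>R a))) (at (v + t *\<^sub>R a))"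
    if "t \<in> {0..s}" for t
  proof -
    have shift: "((\<lambda>u. u + s *\<^sub>R b) has_derivative (\<lambda>h. h)) (at (v + t *\<^sub>R a))"
      by (auto intro!: derivative_eq_intros)
    have "(f has_derivative frechet_derivative f (at (v + t *\<^sub>R a + s *\<^sub>R b)))
            (at (v + t *\<^sub>R a + s *\<^sub>R b))"
         "(f has_derivative frechet_derivative f (at (v + t *\<^sub>R a))) (at (v + t *\<^sub>R a))"
      using df[OF that] by (simp_all add: frechet_derivative_works)
    from has_derivative_diff[OF has_derivative_compose[OF shift this(1)] this(2)] show ?thesis
      by (simp add: o_def)
  qed
  from mvt_along_ray[OF \<open>0 < s\<close> this] show ?thesis
    unfolding second_difference_def by (simp add: algebra_simps)
qed

lemma linear_dd_first:
  assumes "dd [a] f differentiable at v"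
  shows "linear (\<lambda>b. dd [b, a] f v)"
  using linear_frechet_derivative[OF assms] by simp

lemma dd_local_linear_approx:
  fixes f :: "'a::real_normed_vector \<Rightarrow> real"
  assumes "open V" "v \<in> V" and d2f: "dd [a] f differentiable at v" and "0 < e"
  obtains d where "0 < d" and "\<And>x. norm x < d \<Longrightarrow> v + x \<in> V"
    and "\<And>x. norm x < d \<Longrightarrow> \<bar>dd [a] f (v + x) - dd [a] f v - dd [x, a] f v\<bar> \<le> e * norm x"
proof -
  have "(dd [a] f has_derivative (\<lambda>x. dd [x, a] f v)) (at v)"
    using d2f by (simp add: frechet_derivative_works)
  then obtain d1 where "0 < d1" and approx: "\<And>y. norm (y - v) < d1 \<Longrightarrow>
      \<bar>dd [a] f y - dd [a] f v - dd [y - v, a] f v\<bar> \<le> e * norm (y - v)"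
    using \<open>0 < e\<close> unfolding has_derivative_at_alt by fastforce
  obtain d2 where "0 < d2" "ball v d2 \<subseteq> V"
    using \<open>open V\<close> \<open>v \<in> V\<close> openE by blast
  show thesis
  proof (rule that[of "min d1 d2"])
    show "0 < min d1 d2"
      using \<open>0 < d1\<close> \<open>0 < d2\<close> by simp
    show "v + x \<in> V" if "norm x < min d1 d2" for x
      using that \<open>ball v d2 \<subseteq> V\<close> by (auto simp: dist_norm)
    show "\<bar>dd [a] f (v + x) - dd [a] f v - dd [x, a] f v\<bar> \<le> e * norm x" if "norm x < min d1 d2" for x
      using approx[of "v + x"] that by simp
  qed
qed

lemma norm_scaleR_add_le:
  fixes a b :: "'a::real_normed_vector"
  assumes "t \<in> {0..s}" "t' \<in> {0..s}"
  shows "norm (t *\<^sub>R a + t' *\<^sub>R b) \<le> s * (norm a + norm b)"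
proof -
  have "norm (t *\<^sub>R a + t' *\<^sub>R b) \<le> t * norm a + t' * norm b"
    using norm_triangle_ineq[of "t *\<^sub>R a" "t' *\<^sub>R b"] assms by simp
  also have "\<dots> \<le> s * (norm a + norm b)"
    using assms by (simp add: distrib_left add_mono mult_right_mono)
  finally show ?thesis .
qed

lemma exists_pos_mult_less:
  fixes d K :: real
  assumes "0 < d" "0 \<le> K"
  shows "\<exists>r>0. \<forall>s\<in>{0..<r}. s * K < d"
proof (intro exI[of _ "d / (K + 1)"] conjI ballI)
  show "0 < d / (K + 1)"
    using assms by simp
  fix s
  assume "s \<in> {0..<d / (K + 1)}"
  then have "0 \<le> s" "s * (K + 1) < d"
    using assms by (simp_all add: pos_less_divide_eq)
  then show "s * K < d"
    by (simp add: distrib_left)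
qed

lemma second_difference_approx:
  fixes f :: "'a::real_normed_vector \<Rightarrow> real"
  assumes "open V" "v \<in> V" and df: "\<And>u. u \<in> V \<Longrightarrow> f differentiable at u"
    and d2f: "dd [a] f differentiable at v" and "0 < e"
  shows "\<exists>r>0. \<forall>s\<in>{0<..<r}.
    \<bar>second_difference f v a b s - s\<^sup>2 * dd [b, a] f v\<bar> \<le> e * s\<^sup>2 * (2 * (norm a + norm b))"
proof -
  obtain d where "0 < d" and inV: "\<And>x. norm x < d \<Longrightarrow> v + x \<in> V"
    and approx: "\<And>x. norm x < d \<Longrightarrow> \<bar>dd [a] f (v + x) - dd [a] f v - dd [x, a] f v\<bar> \<le> e * norm x"
    using dd_local_linear_approx[OF assms(1,2) d2f \<open>0 < e\<close>] by blast
  obtain r where "0 < r" and r: "\<And>s. s \<in> {0..<r} \<Longrightarrow> s * (norm a + norm b) < d"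
    using exists_pos_mult_less[OF \<open>0 < d\<close>, of "norm a + norm b"] by auto
  show ?thesis
  proof (intro exI[of _ r] conjI ballI \<open>0 < r\<close>)
    fix s
    assume s: "s \<in> {0<..<r}"
    have "s * (norm a + norm b) < d"
      using r[of s] s by simp
    then have small: "norm (t *\<^sub>R a + t' *\<^sub>R b) < d" if "t \<in> {0..s}" "t' \<in> {0..s}" for t t'
      using norm_scaleR_add_le[OF that, of a b] by linarith
    have "v + t *\<^sub>R a + t' *\<^sub>R b \<in> V" if "t \<in> {0..s}" "t' \<in> {0..s}" for t t'
      using inV[OF small[OF that]] by (simp add: add.assoc)
    from this[of _ 0] this[of _ s] obtain \<xi> where \<xi>: "\<xi> \<in> {0<..<s}" and \<Delta>:
      "second_difference f v a b s = s * (dd [a] f (v + \<xi> *\<^sub>R a + s *\<^sub>R b) - dd [a] f (v + \<xi> *\<^sub>R a))"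
      using second_difference_mvt[of s f v a b] df s by force
    have "\<bar>dd [a] f (v + \<xi> *\<^sub>R a + s *\<^sub>R b) - dd [a] f (v + \<xi> *\<^sub>R a) - s * dd [b, a] f v\<bar>
        \<le> e * norm (\<xi> *\<^sub>R a + s *\<^sub>R b) + e * norm (\<xi> *\<^sub>R a + 0 *\<^sub>R b)"
      using approx[OF small[of \<xi> s]] approx[OF small[of \<xi> 0]] \<xi> s
        linear_add[OF linear_dd_first[OF d2f]] linear_cmul[OF linear_dd_first[OF d2f]]
      by (auto simp: add.assoc simp del: dd.simps)
    also have "\<dots> \<le> e * (s * (norm a + norm b)) + e * (s * (norm a + norm b))"
      using norm_scaleR_add_le[of \<xi> s s a b] norm_scaleR_add_le[of \<xi> s 0 a b] \<xi> s \<open>0 < e\<close>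
      by (intro add_mono mult_left_mono) auto
    finally have "\<bar>dd [a] f (v + \<xi> *\<^sub>R a + s *\<^sub>R b) - dd [a] f (v + \<xi> *\<^sub>R a) - s * dd [b, a] f v\<bar>
        \<le> e * (s * (2 * (norm a + norm b)))"
      by (simp only: mult_2 distrib_left)
    moreover have "second_difference f v a b s - s\<^sup>2 * dd [b, a] f v
        = s * (dd [a] f (v + \<xi> *\<^sub>R a + s *\<^sub>R b) - dd [a] f (v + \<xi> *\<^sub>R a) - s * dd [b, a] f v)"
      using \<Delta> by (simp add: power2_eq_square algebra_simps del: dd.simps)
    ultimately show "\<bar>second_difference f v a b s - s\<^sup>2 * dd [b, a] f v\<bar>
        \<le> e * s\<^sup>2 * (2 * (norm a + norm b))"
      using s by (simp add: abs_mult power2_eq_square mult_left_mono mult.left_commute del: dd.simps)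
  qed
qed

text \<open>Both mixed derivatives are limits of \<open>second_difference f v a b s / s\<^sup>2\<close>, which is symmetric
  in \<open>a\<close> and \<open>b\<close>.\<close>

lemma second_derivative_symmetric:
  fixes f :: "'a::real_normed_vector \<Rightarrow> real"
  assumes "open V" "v \<in> V" and df: "\<And>u. u \<in> V \<Longrightarrow> f differentiable at u"
    and d2f: "\<And>a. dd [a] f differentiable at v"
  shows "dd [b, a] f v = dd [a, b] f v"
proof -
  define c where "c = dd [b, a] f v - dd [a, b] f v"
  have "- (e * (4 * (norm a + norm b))) \<le> - \<bar>c\<bar>" if "0 < e" for e
  proof -
    obtain r1 where "0 < r1" and r1: "\<forall>s\<in>{0<..<r1}.
        \<bar>second_difference f v a b s - s\<^sup>2 * dd [b, a] f v\<bar> \<le> e * s\<^sup>2 * (2 * (norm a + norm b))"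
      using second_difference_approx[OF assms(1,2) df d2f \<open>0 < e\<close>] by blast
    obtain r2 where "0 < r2" and r2: "\<forall>s\<in>{0<..<r2}.
        \<bar>second_difference f v a b s - s\<^sup>2 * dd [a, b] f v\<bar> \<le> e * s\<^sup>2 * (2 * (norm a + norm b))"
      using second_difference_approx[OF assms(1,2) df d2f \<open>0 < e\<close>, of b a] second_difference_commute
      by (metis add.commute)
    define s where "s = min r1 r2 / 2"
    have s: "s \<in> {0<..<r1}" "s \<in> {0<..<r2}"
      using \<open>0 < r1\<close> \<open>0 < r2\<close> by (auto simp: s_def)
    define \<Delta> where "\<Delta> = second_difference f v a b s"
    have "s\<^sup>2 * \<bar>c\<bar> = \<bar>(\<Delta> - s\<^sup>2 * dd [a, b] f v) - (\<Delta> - s\<^sup>2 * dd [b, a] f v)\<bar>"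
      unfolding c_def right_diff_distrib by (simp add: abs_mult flip: right_diff_distrib)
    also have "\<dots> \<le> e * s\<^sup>2 * (2 * (norm a + norm b)) + e * s\<^sup>2 * (2 * (norm a + norm b))"
      using r1[rule_format, OF s(1)] r2[rule_format, OF s(2)]
        abs_triangle_ineq4[of "\<Delta> - s\<^sup>2 * dd [a, b] f v" "\<Delta> - s\<^sup>2 * dd [b, a] f v"]
      unfolding \<Delta>_def by linarith
    also have "\<dots> = s\<^sup>2 * (e * (4 * (norm a + norm b)))"
      by (simp add: algebra_simps)
    finally show ?thesis
      using s by (simp add: mult_le_cancel_left_pos)
  qed
  then have "0 \<le> - \<bar>c\<bar>"
    using nonneg_if_ge_minus_eps[of "4 * (norm a + norm b)" "- \<bar>c\<bar>"] by simp
  then show ?thesis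
    by (simp add: c_def)
qed

lemma dd_eq_0_at_min:
  fixes f :: "'a::real_normed_vector \<Rightarrow> real"
  assumes "open V" "v \<in> V" and "f differentiable at v" and min: "\<And>u. u \<in> V \<Longrightarrow> f v \<le> f u"
  shows "dd [a] f v = 0"
proof -
  have "(f has_derivative frechet_derivative f (at v)) (at v)"
    using assms(3) by (simp add: frechet_derivative_works)
  moreover have "\<forall>\<^sub>F u in at v. f v \<le> f u"
    using assms(1,2) min eventually_at_topological by blast
  ultimately show ?thesis
    using has_derivative_local_min by fastforce
qed

lemma second_derivative_nonneg_at_min:
  fixes f :: "'a::real_normed_vector \<Rightarrow> real"
  assumes "open V" "v \<in> V" and df: "\<And>u. u \<in> V \<Longrightarrow> f differentiable at u"
    and min: "\<And>u. u \<in> V \<Longrightarrow> f v \<le> f u"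
    and d2f: "dd [a] f differentiable at v"
  shows "0 \<le> dd [a, a] f v"
proof -
  have "- (e * norm a) \<le> dd [a, a] f v" if "0 < e" for e
  proof -
    obtain d where "0 < d" and inV: "\<And>x. norm x < d \<Longrightarrow> v + x \<in> V"
      and approx: "\<And>x. norm x < d \<Longrightarrow> \<bar>dd [a] f (v + x) - dd [a] f v - dd [x, a] f v\<bar> \<le> e * norm x"
      using dd_local_linear_approx[OF assms(1,2) d2f \<open>0 < e\<close>] by blast
    obtain r where "0 < r" and r: "\<And>t. t \<in> {0..<r} \<Longrightarrow> t * norm a < d"
      using exists_pos_mult_less[OF \<open>0 < d\<close> norm_ge_zero[of a]] by auto
    define s where "s = r / 2"
    have "0 < s"
      using \<open>0 < r\<close> by (simp add: s_def)
    have small: "norm (t *\<^sub>R a) < d" if "t \<in> {0..s}" for t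
      using r[of t] that \<open>0 < r\<close> by (simp add: s_def)
    obtain \<xi> where "\<xi> \<in> {0<..<s}" and \<xi>: "f (v + s *\<^sub>R a) - f v = s * dd [a] f (v + \<xi> *\<^sub>R a)"
      using mvt_along_ray[of s f "\<lambda>t. frechet_derivative f (at (v + t *\<^sub>R a))" v a]
        \<open>0 < s\<close> df[OF inV[OF small]] by (auto simp: frechet_derivative_works)
    have "0 \<le> s * dd [a] f (v + \<xi> *\<^sub>R a)"
      using min[OF inV[OF small[of s]]] \<xi> \<open>0 < s\<close> by simp
    then have "0 \<le> dd [a] f (v + \<xi> *\<^sub>R a)"
      using \<open>0 < s\<close> by (simp add: zero_le_mult_iff del: dd.simps)
    moreover have "\<bar>dd [a] f (v + \<xi> *\<^sub>R a) - \<xi> * dd [a, a] f v\<bar> \<le> e * (\<xi> * norm a)"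
      using approx[OF small[of \<xi>]] dd_eq_0_at_min[OF assms(1,2) df[OF assms(2)] min]
        \<open>\<xi> \<in> {0<..<s}\<close> linear_cmul[OF linear_dd_first[OF d2f]] by (simp del: dd.simps)
    ultimately have "\<xi> * (- (e * norm a)) \<le> \<xi> * dd [a, a] f v"
      by (simp add: abs_le_iff algebra_simps del: dd.simps)
    with \<open>\<xi> \<in> {0<..<s}\<close> show ?thesis
      by (auto intro: mult_left_le_imp_le)
  qed
  then show ?thesis
    by (rule nonneg_if_ge_minus_eps[OF norm_ge_zero])
qed

text \<open>\<open>0 \<le> H (a + t b) (a + t b) = 2 t H b a + t\<^sup>2 H b b\<close> for all \<open>t\<close> forces \<open>H b a = 0\<close>.\<close>

lemma psd_form_isotropic_imp_null:
  fixes H :: "'a::real_vector \<Rightarrow> 'a \<Rightarrow> real"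
  assumes lin: "\<And>w. linear (\<lambda>x. H x w)" and sym: "\<And>x w. H x w = H w x"
    and psd: "\<And>w. 0 \<le> H w w" and "H a a = 0"
  shows "H b a = 0"
proof -
  have add: "H (x + y) w = H x w + H y w" and scale: "H (t *\<^sub>R x) w = t * H x w" for x y w t
    using linear_add[OF lin] linear_cmul[OF lin] by simp_all
  have quadratic: "0 \<le> 2 * t * H b a + t\<^sup>2 * H b b" for t
  proof -
    have add2: "H x (a + t *\<^sub>R b) = H x a + t * H x b" for x
      by (simp add: sym[of x] add scale)
    have "H (a + t *\<^sub>R b) (a + t *\<^sub>R b) = H a a + t * H b a + t * (H a b + t * H b b)"
      by (simp add: add scale add2)
    also have "\<dots> = 2 * t * H b a + t\<^sup>2 * H b b"
      using \<open>H a a = 0\<close> sym[of a b] by (simp add: power2_eq_square algebra_simps)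
    finally show ?thesis
      using psd by metis
  qed
  have "- (e * \<bar>H b b\<bar>) \<le> - \<bar>H b a\<bar>" if "0 < e" for e
  proof -
    have "2 * e * \<bar>H b a\<bar> \<le> e\<^sup>2 * H b b"
      using quadratic[of e] quadratic[of "- e"] \<open>0 < e\<close> by (simp add: abs_if)
    also have "\<dots> \<le> e\<^sup>2 * \<bar>H b b\<bar>"
      by (simp add: mult_left_mono)
    finally have "e * (2 * \<bar>H b a\<bar>) \<le> e * (e * \<bar>H b b\<bar>)"
      by (simp add: power2_eq_square algebra_simps)
    then show ?thesis
      using \<open>0 < e\<close> by (auto dest!: mult_left_le_imp_le)
  qed
  then have "0 \<le> - \<bar>H b a\<bar>"
    by (rule nonneg_if_ge_minus_eps[OF abs_ge_zero])
  then show ?thesis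
    by simp
qed

lemma hessian_degenerate_at_min_iff:
  fixes f :: "'d::euclidean_space \<Rightarrow> real"
  assumes "open V" "v \<in> V" and df: "\<And>u. u \<in> V \<Longrightarrow> f differentiable at u"
    and d2f: "\<And>a. dd [a] f differentiable at v" and min: "\<And>u. u \<in> V \<Longrightarrow> f v \<le> f u"
  shows "hessian_degenerate f v \<longleftrightarrow> (\<exists>a. a \<noteq> 0 \<and> dd [a, a] f v = 0)"
proof
  assume "\<exists>a. a \<noteq> 0 \<and> dd [a, a] f v = 0"
  then obtain a where "a \<noteq> 0" "dd [a, a] f v = 0"
    by blast
  have "dd [b, a] f v = 0" for b
  proof (rule psd_form_isotropic_imp_null[where H = "\<lambda>b a. dd [b, a] f v"])
    show "linear (\<lambda>b. dd [b, w] f v)" for w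
      by (rule linear_dd_first[OF d2f])
    show "dd [x, w] f v = dd [w, x] f v" for x w
      by (rule second_derivative_symmetric[OF assms(1,2) df d2f])
    show "0 \<le> dd [w, w] f v" for w
      by (rule second_derivative_nonneg_at_min[OF assms(1,2) df min d2f])
  qed fact
  with \<open>a \<noteq> 0\<close> show "hessian_degenerate f v"
    unfolding hessian_degenerate_def by blast
qed (auto simp: hessian_degenerate_def)

section \<open>Squared distance to a smooth map\<close>

lemma sq_dist_derivatives:
  fixes \<psi> :: "'d::real_normed_vector \<Rightarrow> 'a::real_inner"
  assumes "open V" "smooth_on V \<psi>" "v \<in> V"
  shows "(\<lambda>u. (norm (\<psi> u - y))\<^sup>2) differentiable at v"
    and "dd [a] (\<lambda>u. (norm (\<psi> u - y))\<^sup>2) differentiable at v"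
    and "dd [b, a] (\<lambda>u. (norm (\<psi> u - y))\<^sup>2) v
      = 2 * inner (dd [b] \<psi> v) (dd [a] \<psi> v) + 2 * inner (\<psi> v - y) (dd [b, a] \<psi> v)"
proof -
  define f where "f = (\<lambda>u. (norm (\<psi> u - y))\<^sup>2)"
  have \<psi>: "(dd vs \<psi> has_derivative frechet_derivative (dd vs \<psi>) (at u)) (at u)" if "u \<in> V" for vs u
    using assms(2) that by (simp add: smooth_on_def frechet_derivative_works)
  have f': "(f has_derivative (\<lambda>h. 2 * inner (\<psi> u - y) (dd [h] \<psi> u))) (at u)" if "u \<in> V" for u
  proof -
    have "((\<lambda>u. \<psi> u - y) has_derivative frechet_derivative \<psi> (at u)) (at u)"
      using has_derivative_diff[OF \<psi>[OF that, of "[]"] has_derivative_const[of y]] by simp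
    from has_derivative_inner[OF this this] show ?thesis
      by (simp add: f_def power2_norm_eq_inner inner_commute)
  qed
  then show "(\<lambda>u. (norm (\<psi> u - y))\<^sup>2) differentiable at v"
    using assms(3) unfolding f_def differentiable_def by blast
  have "((\<lambda>u. 2 * inner (\<psi> u - y) (dd [a] \<psi> u)) has_derivative
      (\<lambda>h. 2 * (inner (\<psi> v - y) (dd [h, a] \<psi> v) + inner (dd [h] \<psi> v) (dd [a] \<psi> v)))) (at v)"
  proof -
    have "((\<lambda>u. \<psi> u - y) has_derivative frechet_derivative \<psi> (at v)) (at v)"
      using has_derivative_diff[OF \<psi>[OF assms(3), of "[]"] has_derivative_const[of y]] by simp
    from has_derivative_mult_right[OF has_derivative_inner[OF this \<psi>[OF assms(3), of "[a]"]], of 2]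
    show ?thesis
      by simp
  qed
  then have f'': "(dd [a] f has_derivative
      (\<lambda>h. 2 * (inner (\<psi> v - y) (dd [h, a] \<psi> v) + inner (dd [h] \<psi> v) (dd [a] \<psi> v)))) (at v)"
  proof (rule has_derivative_transform_within_open[OF _ assms(1,3)])
    show "2 * inner (\<psi> u - y) (dd [a] \<psi> u) = dd [a] f u" if "u \<in> V" for u
      using fun_cong[OF frechet_derivative_at[OF f'[OF that]], of a] by simp
  qed
  then show "dd [a] (\<lambda>u. (norm (\<psi> u - y))\<^sup>2) differentiable at v"
    unfolding f_def differentiable_def by blast
  show "dd [b, a] (\<lambda>u. (norm (\<psi> u - y))\<^sup>2) v
      = 2 * inner (dd [b] \<psi> v) (dd [a] \<psi> v) + 2 * inner (\<psi> v - y) (dd [b, a] \<psi> v)"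
    using frechet_derivative_at[OF f''] unfolding f_def
    by (simp add: fun_eq_iff algebra_simps)
qed

lemma dd_sq_dist_convex_combination:
  fixes \<psi> :: "'d::real_normed_vector \<Rightarrow> 'a::real_inner"
  assumes "open V" "smooth_on V \<psi>" "v \<in> V"
  shows "dd [b, a] (\<lambda>u. (norm (\<psi> u - ((1 - \<alpha>) *\<^sub>R p + \<alpha> *\<^sub>R q)))\<^sup>2) v
    = (1 - \<alpha>) * dd [b, a] (\<lambda>u. (norm (\<psi> u - p))\<^sup>2) v + \<alpha> * dd [b, a] (\<lambda>u. (norm (\<psi> u - q))\<^sup>2) v"
  unfolding sq_dist_derivatives(3)[OF assms]
  by (simp add: inner_diff_left inner_add_left algebra_simps)

section \<open>Nearest points along a segment\<close>

lemma sq_dist_diff_convex_combination: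
  fixes \<nu> \<mu> p q :: "'a::real_inner"
  shows "(norm (\<nu> - ((1 - \<alpha>) *\<^sub>R p + \<alpha> *\<^sub>R q)))\<^sup>2 - (norm (\<mu> - ((1 - \<alpha>) *\<^sub>R p + \<alpha> *\<^sub>R q)))\<^sup>2
    = (1 - \<alpha>) * ((norm (\<nu> - p))\<^sup>2 - (norm (\<mu> - p))\<^sup>2) + \<alpha> * ((norm (\<nu> - q))\<^sup>2 - (norm (\<mu> - q))\<^sup>2)"
  by (simp add: power2_norm_eq_inner inner_diff_left inner_diff_right inner_add_left
      inner_add_right inner_commute algebra_simps)

lemma convex_combination_nonpos_imp_zero:
  fixes p q \<alpha> :: real
  assumes "0 \<le> p" "0 \<le> q" "\<alpha> \<in> {0..1}" "(1 - \<alpha>) * p + \<alpha> * q \<le> 0"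
  shows "p = 0 \<or> q = 0"
proof -
  have "0 \<le> (1 - \<alpha>) * p" "0 \<le> \<alpha> * q"
    using assms(1-3) by simp_all
  with assms(4) have "(1 - \<alpha>) * p = 0" "\<alpha> * q = 0"
    by linarith+
  then show ?thesis
    by (cases "\<alpha> = 1") auto
qed

lemma is_nearest_segment:
  assumes "is_nearest M t0 \<mu>" "is_nearest M t1 \<mu>" "\<alpha> \<in> {0..1}"
  shows "is_nearest M ((1 - \<alpha>) *\<^sub>R t0 + \<alpha> *\<^sub>R t1) \<mu>"
  unfolding is_nearest_def
proof (intro conjI ballI)
  show "\<mu> \<in> M"
    using assms(1) by (simp add: is_nearest_def)
  fix \<nu>
  assume "\<nu> \<in> M"
  then have "0 \<le> (1 - \<alpha>) * ((norm (\<nu> - t0))\<^sup>2 - (norm (\<mu> - t0))\<^sup>2)"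
    and "0 \<le> \<alpha> * ((norm (\<nu> - t1))\<^sup>2 - (norm (\<mu> - t1))\<^sup>2)"
    using assms by (simp_all add: is_nearest_def)
  then show "(norm (\<mu> - ((1 - \<alpha>) *\<^sub>R t0 + \<alpha> *\<^sub>R t1)))\<^sup>2 \<le> (norm (\<nu> - ((1 - \<alpha>) *\<^sub>R t0 + \<alpha> *\<^sub>R t1)))\<^sup>2"
    using sq_dist_diff_convex_combination[of \<nu> \<alpha> t0 t1 \<mu>] by linarith
qed

lemma is_nearest_segment_cases:
  assumes "is_nearest M t0 \<mu>" "is_nearest M t1 \<mu>" "\<alpha> \<in> {0..1}"
    and "is_nearest M ((1 - \<alpha>) *\<^sub>R t0 + \<alpha> *\<^sub>R t1) \<nu>"
  shows "is_nearest M t0 \<nu> \<or> is_nearest M t1 \<nu>"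
proof -
  have "\<nu> \<in> M"
    using assms(4) by (simp add: is_nearest_def)
  then have "0 \<le> (norm (\<nu> - t0))\<^sup>2 - (norm (\<mu> - t0))\<^sup>2" "0 \<le> (norm (\<nu> - t1))\<^sup>2 - (norm (\<mu> - t1))\<^sup>2"
    using assms(1,2) by (simp_all add: is_nearest_def)
  moreover have "(norm (\<nu> - ((1 - \<alpha>) *\<^sub>R t0 + \<alpha> *\<^sub>R t1)))\<^sup>2
      \<le> (norm (\<mu> - ((1 - \<alpha>) *\<^sub>R t0 + \<alpha> *\<^sub>R t1)))\<^sup>2"
    using assms(1,4) unfolding is_nearest_def by blast
  then have "(1 - \<alpha>) * ((norm (\<nu> - t0))\<^sup>2 - (norm (\<mu> - t0))\<^sup>2)
      + \<alpha> * ((norm (\<nu> - t1))\<^sup>2 - (norm (\<mu> - t1))\<^sup>2) \<le> 0"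
    using sq_dist_diff_convex_combination[of \<nu> \<alpha> t0 t1 \<mu>] by linarith
  ultimately have "(norm (\<nu> - t0))\<^sup>2 = (norm (\<mu> - t0))\<^sup>2 \<or> (norm (\<nu> - t1))\<^sup>2 = (norm (\<mu> - t1))\<^sup>2"
    using convex_combination_nonpos_imp_zero[OF _ _ assms(3)] by fastforce
  then show ?thesis
    using assms(1,2) \<open>\<nu> \<in> M\<close> by (auto simp: is_nearest_def)
qed

lemma hessian_degenerate_segment_cases:
  fixes \<psi> :: "'d::euclidean_space \<Rightarrow> 'a::euclidean_space"
  assumes "open V" "smooth_on V \<psi>" "\<psi> ` V \<subseteq> M" "v \<in> V"
    and near: "is_nearest M t0 (\<psi> v)" "is_nearest M t1 (\<psi> v)" and "\<alpha> \<in> {0..1}"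
    and "hessian_degenerate (\<lambda>u. (norm (\<psi> u - ((1 - \<alpha>) *\<^sub>R t0 + \<alpha> *\<^sub>R t1)))\<^sup>2) v"
  shows "hessian_degenerate (\<lambda>u. (norm (\<psi> u - t0))\<^sup>2) v \<or> hessian_degenerate (\<lambda>u. (norm (\<psi> u - t1))\<^sup>2) v"
proof -
  have min: "(norm (\<psi> v - t))\<^sup>2 \<le> (norm (\<psi> u - t))\<^sup>2" if "is_nearest M t (\<psi> v)" "u \<in> V" for t u
    using that assms(3) by (auto simp: is_nearest_def)
  have degenerate_iff: "hessian_degenerate (\<lambda>u. (norm (\<psi> u - t))\<^sup>2) v
      \<longleftrightarrow> (\<exists>a. a \<noteq> 0 \<and> dd [a, a] (\<lambda>u. (norm (\<psi> u - t))\<^sup>2) v = 0)"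
    if "is_nearest M t (\<psi> v)" for t
    by (rule hessian_degenerate_at_min_iff[OF assms(1,4) sq_dist_derivatives(1)[OF assms(1,2)]
          sq_dist_derivatives(2)[OF assms(1,2,4)] min[OF that]])
  have nonneg: "0 \<le> dd [a, a] (\<lambda>u. (norm (\<psi> u - t))\<^sup>2) v" if "is_nearest M t (\<psi> v)" for t a
    by (rule second_derivative_nonneg_at_min[OF assms(1,4) sq_dist_derivatives(1)[OF assms(1,2)]
          min[OF that] sq_dist_derivatives(2)[OF assms(1,2,4)]])
  obtain a where "a \<noteq> 0" "dd [a, a] (\<lambda>u. (norm (\<psi> u - ((1 - \<alpha>) *\<^sub>R t0 + \<alpha> *\<^sub>R t1)))\<^sup>2) v = 0"
    using degenerate_iff[OF is_nearest_segment[OF near assms(7)]] assms(8) by blast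
  then have "(1 - \<alpha>) * dd [a, a] (\<lambda>u. (norm (\<psi> u - t0))\<^sup>2) v
      + \<alpha> * dd [a, a] (\<lambda>u. (norm (\<psi> u - t1))\<^sup>2) v \<le> 0"
    using dd_sq_dist_convex_combination[OF assms(1,2,4), where b = a and a = a and \<alpha> = \<alpha> and p = t0 and q = t1]
    by linarith
  then have "dd [a, a] (\<lambda>u. (norm (\<psi> u - t0))\<^sup>2) v = 0 \<or> dd [a, a] (\<lambda>u. (norm (\<psi> u - t1))\<^sup>2) v = 0"
    by (rule convex_combination_nonpos_imp_zero[OF nonneg[OF near(1)] nonneg[OF near(2)] assms(7)])
  then show ?thesis
    using degenerate_iff[OF near(1)] degenerate_iff[OF near(2)] \<open>a \<noteq> 0\<close> by blast
qed

lemma local_paramD: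
  assumes "local_param M V \<psi>"
  shows "open V" "smooth_on V \<psi>" "\<psi> ` V \<subseteq> M"
  using assms unfolding local_param_def by (auto dest: homeomorphism_image1)

lemma notin_cutlocus_iff:
  "t \<notin> cutlocus M TYPE('d::euclidean_space) \<longleftrightarrow> (\<exists>!\<mu>. is_nearest M t \<mu>) \<and>
    (\<forall>V (\<psi>::'d \<Rightarrow> 'a::euclidean_space) v. local_param M V \<psi> \<longrightarrow> v \<in> V \<longrightarrow> is_nearest M t (\<psi> v)
       \<longrightarrow> \<not> hessian_degenerate (\<lambda>u. (norm (\<psi> u - t))\<^sup>2) v)"
  unfolding cutlocus_def by blast

lemma nearest_point_eq_iff:
  assumes "\<exists>!\<mu>. is_nearest M t \<mu>"
  shows "nearest_point M t = \<mu> \<longleftrightarrow> is_nearest M t \<mu>"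
  unfolding nearest_point_def using theI'[OF assms] the1_equality[OF assms] by blast

theorem lemma3p3:
  fixes M :: "'a::euclidean_space set" and t0 t1 \<mu> :: 'a and \<alpha> :: real
  assumes "compact M"
    and "smooth_submanifold M TYPE('d::euclidean_space)"
    and "t0 \<notin> cutlocus M TYPE('d)" and "t1 \<notin> cutlocus M TYPE('d)"
    and "nearest_point M t0 = \<mu>" and "nearest_point M t1 = \<mu>"
    and "\<alpha> \<in> {0..1}"
  shows "(1 - \<alpha>) *\<^sub>R t0 + \<alpha> *\<^sub>R t1 \<notin> cutlocus M TYPE('d)
       \<and> nearest_point M ((1 - \<alpha>) *\<^sub>R t0 + \<alpha> *\<^sub>R t1) = \<mu>"
proof -
  define x where "x = (1 - \<alpha>) *\<^sub>R t0 + \<alpha> *\<^sub>R t1"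
  from assms(3,4) have unique: "\<exists>!\<mu>. is_nearest M t0 \<mu>" "\<exists>!\<mu>. is_nearest M t1 \<mu>"
    and nondegenerate: "\<And>t V (\<psi>::'d \<Rightarrow> 'a) v. t \<in> {t0, t1} \<Longrightarrow> local_param M V \<psi> \<Longrightarrow> v \<in> V
      \<Longrightarrow> is_nearest M t (\<psi> v) \<Longrightarrow> \<not> hessian_degenerate (\<lambda>u. (norm (\<psi> u - t))\<^sup>2) v"
    unfolding notin_cutlocus_iff by blast+
  have near: "is_nearest M t0 \<mu>" "is_nearest M t1 \<mu>"
    using unique assms(5,6) nearest_point_eq_iff by blast+
  have near_x: "is_nearest M x \<nu> \<longleftrightarrow> \<nu> = \<mu>" for \<nu>
    using is_nearest_segment[OF near assms(7)] is_nearest_segment_cases[OF near assms(7)] unique near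
    unfolding x_def by blast
  have "\<not> hessian_degenerate (\<lambda>u. (norm (\<psi> u - x))\<^sup>2) v"
    if "local_param M V \<psi>" "v \<in> V" "is_nearest M x (\<psi> v)" for V v and \<psi> :: "'d \<Rightarrow> 'a"
    using hessian_degenerate_segment_cases[OF local_paramD[OF that(1)] that(2) _ _ assms(7)]
      nondegenerate[OF _ that(1,2)] near near_x that(3) unfolding x_def by fastforce
  with near_x show ?thesis
    unfolding x_def[symmetric] notin_cutlocus_iff by (metis nearest_point_eq_iff)
qed

end
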